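(* Let $n\ge 6$ be even and let $L$ be a Latin square of order $n$ with inner distance $\frac n2-1$. If some row of $L$ has extended difference row equal to Row A, then $L$ is a row product.
   Context: Symbols are $[1,n]$; $\mathrm{dist}(a,b)$ is the minimum of the residues of $a-b$ and $b-a$ mod $n$ (in $[0,n-1]$). A Latin square of order $n$ is an $n\times n$ matrix $(m_{i,j})$ over $[1,n]$ with each symbol exactly once per row and column; its inner distance is the minimum of $\mathrm{dist}$ over symbols in horizontally or vertically adjacent cells. For a Latin row $(s_1,\dots,s_n)$, with $h_j\in[0,n-1]$, $h_j\equiv s_{j+1}-s_j\pmod n$ ($1\le j\le n-1$) and $h_n\equiv s_1-s_n\pmod n$, its difference row is $(h_1,\dots,h_{n-1})$ and its extended difference row is $(\epsilon_1,\dots,\epsilon_{n-1},h)$ with $\epsilon_j=h_j-\frac n2$, $h=h_n-\frac n2$ (integers). Row A is the extended difference row $(0,1,0,1,\dots,1,0,1-\frac n2)$, whose first $n-1$ entries alternate $0,1$ starting and ending with $0$. For $L$, $H$ is the $n\times(n-1)$ matrix with $h_{i,j}\equiv m_{i,j+1}-m_{i,j}$ and $V$ the $(n-1)\times n$ matrix with $v_{i,j}\equiv m_{i+1,j}-m_{i,j}$ (mod $n$). A row product is a Latin square obtained by adding a constant mod $n$ to all entries of $\mathrm{prod}(d,d')$, the $n\times n$ matrix with $1$ in cell $(1,1)$ whose $H$ has every row equal to a difference row $d$ and whose $V$ has every column equal to a difference row $d'$. *)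

theory Defs
  imports Main
begin

text \<open>Conventions: rows/columns indexed by 1..n; symbols are integers in 1..n.
A matrix is a function M :: nat => nat => int, entry (i,j) = M i j.\<close>

definition cdist :: "nat \<Rightarrow> int \<Rightarrow> int \<Rightarrow> int" where
  "cdist n a b = min ((a - b) mod int n) ((b - a) mod int n)"

definition latin_row :: "nat \<Rightarrow> (nat \<Rightarrow> int) \<Rightarrow> bool" where
  "latin_row n s \<longleftrightarrow> bij_betw s {1..n} {1..int n}"

definition latin_square :: "nat \<Rightarrow> (nat \<Rightarrow> nat \<Rightarrow> int) \<Rightarrow> bool" where
  "latin_square n M \<longleftrightarrow>
     (\<forall>i\<in>{1..n}. bij_betw (\<lambda>j. M i j) {1..n} {1..int n}) \<and>
     (\<forall>j\<in>{1..n}. bij_betw (\<lambda>i. M i j) {1..n} {1..int n})"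

definition inner_distance :: "nat \<Rightarrow> (nat \<Rightarrow> nat \<Rightarrow> int) \<Rightarrow> int" where
  "inner_distance n M = Min
     ({cdist n (M i j) (M i (j+1)) | i j. i \<in> {1..n} \<and> j \<in> {1..n-1}} \<union>
      {cdist n (M i j) (M (i+1) j) | i j. i \<in> {1..n-1} \<and> j \<in> {1..n}})"

definition diff_row :: "nat \<Rightarrow> (nat \<Rightarrow> int) \<Rightarrow> nat \<Rightarrow> int" where
  "diff_row n s j = (s (j+1) - s j) mod int n"

definition ext_diff_row :: "nat \<Rightarrow> (nat \<Rightarrow> int) \<Rightarrow> nat \<Rightarrow> int" where
  "ext_diff_row n s j =
     (if j < n then diff_row n s j - int (n div 2)
      else (s 1 - s n) mod int n - int (n div 2))"

definition rowA :: "nat \<Rightarrow> nat \<Rightarrow> int" where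
  "rowA n j = (if j = n then 1 - int (n div 2) else if even j then 1 else 0)"

definition is_difference_row :: "nat \<Rightarrow> (nat \<Rightarrow> int) \<Rightarrow> bool" where
  "is_difference_row n d \<longleftrightarrow>
     (\<exists>s. latin_row n s \<and> (\<forall>j\<in>{1..n-1}. d j = diff_row n s j))"

text \<open>prod(d,d'): 1 at (1,1), every row of H equals d, every column of V equals d'.\<close>
definition prod_mat :: "nat \<Rightarrow> (nat \<Rightarrow> int) \<Rightarrow> (nat \<Rightarrow> int) \<Rightarrow> nat \<Rightarrow> nat \<Rightarrow> int" where
  "prod_mat n d d' i j = ((\<Sum>k\<in>{1..<i}. d' k) + (\<Sum>k\<in>{1..<j}. d k)) mod int n + 1"

definition row_product :: "nat \<Rightarrow> (nat \<Rightarrow> nat \<Rightarrow> int) \<Rightarrow> bool" where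
  "row_product n M \<longleftrightarrow> latin_square n M \<and>
     (\<exists>d d' c. is_difference_row n d \<and> is_difference_row n d' \<and>
        (\<forall>i\<in>{1..n}. \<forall>j\<in>{1..n}. M i j = (prod_mat n d d' i j - 1 + c) mod int n + 1))"

end

theory Submission
  imports Defs
begin

(* Write m = n/2. Inner distance m - 1 means that any two adjacent entries differ by m - 1, m or
   m + 1 modulo n. A row with extended difference row Row A is a shift s + rowA_seq of the row
   0, m, 1, m + 1, 2, ...; an adjacent row then has the form s + m + rowA_seq + x with x taking
   values in {-1, 0, 1}, and reading x off at the symbols of Row A turns p \<mapsto> p + x p into a
   permutation of Z/n moving every point by at most one. Such a permutation is a rotation or a
   product of disjoint transpositions of adjacent symbols, and the horizontal steps of the adjacent
   row confine the transpositions to the symbols -2, ..., 1. In the latter case a third row,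
   adjacent to one of the two, is forced to repeat a symbol in a row or in a column. So adjacent
   rows differ by constants, every row is a shifted Row A, and a Latin square whose consecutive
   rows differ by constants is a row product. *)

lemma dvd_abs_less_imp_eq_0:
  fixes N k :: int
  assumes "N dvd k" "\<bar>k\<bar> < N"
  shows "k = 0"
  using assms dvd_imp_le_int by force

lemma bij_betw_residues_inj:
  assumes "bij_betw f A {1..int n}" "a \<in> A" "b \<in> A" "int n dvd (f a - f b)"
  shows "a = b"
proof -
  have "f a \<in> {1..int n}" "f b \<in> {1..int n}"
    using bij_betw_apply[OF assms(1)] assms(2,3) by simp_all
  then have "f a = f b"
    using dvd_abs_less_imp_eq_0[OF assms(4)] by auto
  then show ?thesis
    using assms(1-3) by (auto dest: bij_betw_imp_inj_on inj_onD)
qed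

lemma bij_betw_residues_surj:
  assumes "bij_betw f A {1..int n}" "0 < n"
  shows "\<exists>a\<in>A. int n dvd (f a - q)"
proof -
  have "(q - 1) mod int n < int n"
    using assms(2) by simp
  moreover have "0 \<le> (q - 1) mod int n"
    using assms(2) by simp
  ultimately have "(q - 1) mod int n + 1 \<in> {1..int n}"
    unfolding atLeastAtMost_iff by linarith
  then obtain a where a: "a \<in> A" "f a = (q - 1) mod int n + 1"
    using bij_betw_imp_surj_on[OF assms(1)] by (metis imageE)
  have "f a - q = - ((q - 1) - (q - 1) mod int n)"
    using a(2) by simp
  then have "int n dvd (f a - q)"
    by (simp only: dvd_minus_iff dvd_minus_mod)
  then show ?thesis
    using a(1) by blast
qed

lemma dvd_telescope:
  fixes f d :: "nat \<Rightarrow> int"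
  assumes diff: "\<And>k. 1 \<le> k \<Longrightarrow> k < N \<Longrightarrow> c dvd (f (k + 1) - f k - d k)"
    and j: "1 \<le> j" "j \<le> N"
  shows "c dvd (f j - f 1 - (\<Sum>k\<in>{1..<j}. d k))"
  using j(1)
proof (induction rule: dec_induct)
  case base
  then show ?case by simp
next
  case (step k)
  have "(\<Sum>i\<in>{1..<Suc k}. d i) = (\<Sum>i\<in>{1..<k}. d i) + d k"
    using step.hyps(1) by simp
  then have eq: "f (Suc k) - f 1 - (\<Sum>i\<in>{1..<Suc k}. d i)
      = (f k - f 1 - (\<Sum>i\<in>{1..<k}. d i)) + (f (Suc k) - f k - d k)"
    by linarith
  have "c dvd (f (Suc k) - f k - d k)"
    using diff step.hyps j(2) by simp
  with step.IH show ?case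
    unfolding eq by (rule dvd_add)
qed

lemma eq_mod_plus_one:
  assumes "a \<in> {1..int n}" "int n dvd (a - 1 - b)"
  shows "a = b mod int n + 1"
proof -
  have "(a - 1) mod int n = b mod int n"
    using assms(2) by (simp add: mod_eq_dvd_iff)
  moreover have "(a - 1) mod int n = a - 1"
    using assms(1) by simp
  ultimately show ?thesis
    by simp
qed

lemma iff_propagates_on_interval:
  fixes P :: "nat \<Rightarrow> bool"
  assumes step: "\<And>i. i \<in> {1..n - 1} \<Longrightarrow> P i \<longleftrightarrow> P (i + 1)"
    and "i0 \<in> {1..n}" "P i0" "i \<in> {1..n}"
  shows "P i"
proof -
  have "P k \<longleftrightarrow> P 1" if "k \<in> {1..n}" for k
    using that
  proof (induction k)
    case 0
    then show ?case by simp
  next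
    case (Suc k)
    then show ?case
      using step[of k] by (cases "k = 0") auto
  qed
  then show ?thesis
    using assms(2-4) by blast
qed

lemma nat_pos_odd_even_cases:
  fixes j :: nat
  assumes "1 \<le> j"
  obtains k where "j = 2 * k + 1" | k where "j = 2 * k + 2"
proof (cases "odd j")
  case True
  then show ?thesis
    using that(1) by (auto elim!: oddE)
next
  case False
  then obtain b where "j = 2 * b"
    by (auto elim!: evenE)
  with assms have "j = 2 * (b - 1) + 2"
    by simp
  then show ?thesis
    by (rule that(2))
qed

section \<open>Near-identity permutations of the integers mod N\<close>

lemma near_identity_perm_preimage:
  fixes N :: int and \<delta> :: "int \<Rightarrow> int"
  assumes per: "\<And>a b. N dvd (a - b) \<Longrightarrow> \<delta> a = \<delta> b"
    and rng: "\<And>a. \<delta> a \<in> {-1, 0, 1}"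
    and surj: "\<And>q. \<exists>p. N dvd (p + \<delta> p - q)"
  shows "\<delta> (q - 1) = 1 \<or> \<delta> q = 0 \<or> \<delta> (q + 1) = -1"
proof -
  obtain p where "N dvd (p + \<delta> p - q)"
    using surj by blast
  then have image: "\<delta> p = \<delta> (q - \<delta> p)"
    by (intro per) (simp add: algebra_simps)
  from rng[of p] consider "\<delta> p = -1" | "\<delta> p = 0" | "\<delta> p = 1"
    by blast
  then show ?thesis
    by cases (use image in simp_all)
qed

lemma near_identity_perm_pred:
  fixes N :: int and \<delta> :: "int \<Rightarrow> int"
  assumes "0 < N"
    and per: "\<And>a b. N dvd (a - b) \<Longrightarrow> \<delta> a = \<delta> b"
    and rng: "\<And>a. \<delta> a \<in> {-1, 0, 1}"
    and surj: "\<And>q. \<exists>p. N dvd (p + \<delta> p - q)"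
    and nonconst: "\<delta> a \<noteq> \<delta> b"
    and v: "\<delta> v = -1"
  shows "\<delta> (v - 1) = 1"
proof (rule ccontr)
  assume start: "\<delta> (v - 1) \<noteq> 1"
  \<comment> \<open>then the preimages of v, v + 1, v + 2, ... force \<open>\<delta> = -1\<close> everywhere\<close>
  have walk: "\<delta> (v + int k) = -1 \<and> \<delta> (v + int k - 1) \<noteq> 1" for k
  proof (induction k)
    case 0
    then show ?case using v start by simp
  next
    case (Suc k)
    have "\<delta> (v + int k - 1) = 1 \<or> \<delta> (v + int k) = 0 \<or> \<delta> (v + int k + 1) = -1"
      by (rule near_identity_perm_preimage[OF per rng surj])
    then have "\<delta> (v + int k + 1) = -1"
      using Suc.IH by simp
    moreover have "v + int (Suc k) = v + int k + 1"
      by simp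
    ultimately show ?case
      using Suc.IH by (simp only:) simp
  qed
  have reduce: "\<delta> w = \<delta> (v + int (nat ((w - v) mod N)))" for w
  proof (rule per)
    have "w - (v + int (nat ((w - v) mod N))) = (w - v) - (w - v) mod N"
      using \<open>0 < N\<close> by simp
    then show "N dvd (w - (v + int (nat ((w - v) mod N))))"
      by (simp only: dvd_minus_mod)
  qed
  have "\<delta> w = -1" for w
    using reduce[of w] walk[of "nat ((w - v) mod N)"] by (rule trans[OF _ conjunct1])
  then show False
    using nonconst by simp
qed

lemma near_identity_perm_succ:
  fixes N :: int and \<delta> :: "int \<Rightarrow> int"
  assumes "0 < N"
    and per: "\<And>a b. N dvd (a - b) \<Longrightarrow> \<delta> a = \<delta> b"
    and rng: "\<And>a. \<delta> a \<in> {-1, 0, 1}"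
    and surj: "\<And>q. \<exists>p. N dvd (p + \<delta> p - q)"
    and nonconst: "\<delta> a \<noteq> \<delta> b"
    and v: "\<delta> v = 1"
  shows "\<delta> (v + 1) = -1"
proof -
  define \<mu> where "\<mu> a = - \<delta> (- a)" for a
  have "\<mu> (- v - 1) = 1"
  proof (rule near_identity_perm_pred[where \<delta> = \<mu> and v = "- v" and a = "- a" and b = "- b"])
    show "0 < N"
      by (fact \<open>0 < N\<close>)
    show "\<mu> x = \<mu> y" if "N dvd (x - y)" for x y
      using per[of "- x" "- y"] that dvd_diff_commute[of N x y] by (simp add: \<mu>_def)
    show "\<mu> x \<in> {-1, 0, 1}" for x
      using rng[of "- x"] by (auto simp: \<mu>_def)
    show "\<exists>p. N dvd (p + \<mu> p - q)" for q
    proof -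
      obtain p where "N dvd (p + \<delta> p - (- q))"
        using surj by blast
      moreover have "- p + \<mu> (- p) - q = - (p + \<delta> p - (- q))"
        by (simp add: \<mu>_def)
      ultimately have "N dvd (- p + \<mu> (- p) - q)"
        by (metis dvd_minus_iff)
      then show ?thesis by blast
    qed
    show "\<mu> (- a) \<noteq> \<mu> (- b)"
      using nonconst by (simp add: \<mu>_def)
    show "\<mu> (- v) = -1"
      using v by (simp add: \<mu>_def)
  qed
  then show ?thesis
    by (simp add: \<mu>_def add.commute)
qed

(* across and descent are what the horizontal steps of a row at its odd and even positions impose
   on its deviation from Row A, read off at symbols (by_symbol_order). *)
context
  fixes m :: int and \<delta> :: "int \<Rightarrow> int" and a b :: int
  assumes three_le_m: "3 \<le> m"
    and per: "\<And>a b. 2 * m dvd (a - b) \<Longrightarrow> \<delta> a = \<delta> b"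
    and rng: "\<And>a. \<delta> a \<in> {-1, 0, 1}"
    and surj: "\<And>q. \<exists>p. 2 * m dvd (p + \<delta> p - q)"
    and nonconst: "\<delta> a \<noteq> \<delta> b"
    and across: "\<And>k. 0 \<le> k \<Longrightarrow> k < m \<Longrightarrow> \<bar>\<delta> k - \<delta> (m + k)\<bar> \<le> 1"
    and descent: "\<And>k. 0 \<le> k \<Longrightarrow> k \<le> m - 2 \<Longrightarrow> \<delta> (k + 1) \<le> \<delta> (m + k)"
begin

private lemma pos: "0 < 2 * m"
  using three_le_m by simp

private lemma pred: "\<delta> v = -1 \<Longrightarrow> \<delta> (v - 1) = 1"
  by (rule near_identity_perm_pred[OF pos per rng surj nonconst])

private lemma succ: "\<delta> v = 1 \<Longrightarrow> \<delta> (v + 1) = -1"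
  by (rule near_identity_perm_succ[OF pos per rng surj nonconst])

private lemma no_minus_upper:
  assumes "0 \<le> k" "k \<le> m - 2"
  shows "\<delta> (m + k) \<noteq> -1"
proof
  assume minus: "\<delta> (m + k) = -1"
  have "\<delta> (k + 1) = -1"
    using descent[OF assms] minus rng[of "k + 1"] by auto
  then have "\<delta> k = 1"
    using pred[of "k + 1"] by simp
  then show False
    using across[of k] assms minus by simp
qed

private lemma no_plus_lower:
  assumes "1 \<le> j" "j \<le> m - 1"
  shows "\<delta> j \<noteq> 1"
proof
  assume plus: "\<delta> j = 1"
  have "\<delta> (m + (j - 1)) = 1"
    using descent[of "j - 1"] assms plus rng[of "m + (j - 1)"] by auto
  then have "\<delta> (m + j) = -1"
    using succ[of "m + (j - 1)"] by (simp add: algebra_simps)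
  then have "j = m - 1"
    using no_minus_upper[of j] assms by fastforce
  then show False
    using succ[OF plus] no_minus_upper[of 0] three_le_m by simp
qed

private lemma no_minus_lower: "2 \<le> j \<Longrightarrow> j \<le> m - 1 \<Longrightarrow> \<delta> j \<noteq> -1"
  using pred[of j] no_plus_lower[of "j - 1"] by force

private lemma no_plus_upper: "0 \<le> k \<Longrightarrow> k \<le> m - 3 \<Longrightarrow> \<delta> (m + k) \<noteq> 1"
  using succ[of "m + k"] no_minus_upper[of "k + 1"] by (force simp: add.assoc)

lemma near_identity_perm_vanishes:
  assumes "2 \<le> v" "v \<le> 2 * m - 3"
  shows "\<delta> v = 0"
proof (cases "v < m")
  case True
  then show ?thesis
    using no_plus_lower[of v] no_minus_lower[of v] rng[of v] assms by auto
next
  case False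
  then show ?thesis
    using no_plus_upper[of "v - m"] no_minus_upper[of "v - m"] rng[of v] assms by auto
qed

lemma near_identity_perm_swaps:
  "(\<delta> (-2), \<delta> (-1), \<delta> 0, \<delta> 1) \<in> {(0, 0, 1, -1), (0, 1, -1, 0), (1, -1, 0, 0), (1, -1, 1, -1)}"
proof -
  have wrap: "\<delta> (2 * m - 2) = \<delta> (-2)" "\<delta> (2 * m - 1) = \<delta> (-1)"
    by (intro per; simp)+
  obtain c where c: "\<delta> c \<noteq> 0"
    using nonconst by (cases "\<delta> a = 0") auto
  define r where "r = c mod (2 * m)"
  have "\<delta> r = \<delta> c"
    unfolding r_def by (intro per dvd_diff_commute[THEN iffD1, OF dvd_minus_mod])
  moreover have "0 \<le> r" "r < 2 * m"
    using pos by (simp_all add: r_def)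
  ultimately have "\<delta> 0 \<noteq> 0 \<or> \<delta> 1 \<noteq> 0 \<or> \<delta> (-2) \<noteq> 0 \<or> \<delta> (-1) \<noteq> 0"
    using near_identity_perm_vanishes[of r] c wrap
    by (cases "r = 0 \<or> r = 1 \<or> r = 2 * m - 2 \<or> r = 2 * m - 1") auto
  moreover have "\<delta> (-2) \<noteq> -1"
    using no_minus_upper[of "m - 2"] wrap(1) three_le_m by (simp add: algebra_simps)
  moreover have "\<delta> 1 \<noteq> 1"
    using no_plus_lower[of 1] three_le_m by simp
  moreover have "\<delta> (-2) = 1 \<longleftrightarrow> \<delta> (-1) = -1"
    using succ[of "-2"] pred[of "-1"] by auto
  moreover have "\<delta> (-1) = 1 \<longleftrightarrow> \<delta> 0 = -1"
    using succ[of "-1"] pred[of 0] by auto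
  moreover have "\<delta> 0 = 1 \<longleftrightarrow> \<delta> 1 = -1"
    using succ[of 0] pred[of 1] by auto
  ultimately show ?thesis
    using rng[of "-2"] rng[of "-1"] rng[of 0] rng[of 1] by auto
qed

end

section \<open>Rows close to Row A\<close>

(* The Latin row starting with 0 (entries read mod 2m) whose extended difference row is Row A. *)
definition rowA_seq :: "nat \<Rightarrow> nat \<Rightarrow> int" where
  "rowA_seq m j = int ((j - 1) div 2) + (if even j then int m else 0)"

lemma rowA_seq_odd [simp]: "rowA_seq m (2 * k + 1) = int k"
  by (simp add: rowA_seq_def)

lemma rowA_seq_even [simp]: "rowA_seq m (2 * k + 2) = int k + int m"
  by (simp add: rowA_seq_def)

lemma rowA_seq_step:
  assumes "1 \<le> j"
  shows "rowA_seq m (j + 1) - rowA_seq m j = (if odd j then int m else 1 - int m)"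
  using assms by (auto simp: rowA_seq_def elim!: oddE evenE)

lemma rowA_seq_interior:
  assumes "j \<in> {1..2 * m} - {1, 3, 2 * m - 2, 2 * m}"
  shows "2 \<le> rowA_seq m j \<and> rowA_seq m j \<le> 2 * int m - 3"
proof -
  have "1 \<le> j"
    using assms by simp
  then show ?thesis
  proof (rule nat_pos_odd_even_cases)
    fix k assume "j = 2 * k + 1"
    then have "2 \<le> k" "k < m"
      using assms by auto
    then show ?thesis
      using \<open>j = 2 * k + 1\<close> by (simp add: rowA_seq_def)
  next
    fix k assume "j = 2 * k + 2"
    then have "k + 3 \<le> m"
      using assms by (simp, presburger)
    then show ?thesis
      using \<open>j = 2 * k + 2\<close> by (simp add: rowA_seq_def)
  qed
qed

(* The value of x at the position where rowA_seq m carries the symbol v mod 2m. *)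
definition by_symbol :: "nat \<Rightarrow> (nat \<Rightarrow> int) \<Rightarrow> int \<Rightarrow> int" where
  "by_symbol m x v =
     (let r = v mod (2 * int m) in
      if r < int m then x (nat (2 * r + 1)) else x (nat (2 * (r - int m) + 2)))"

lemma by_symbol_periodic:
  assumes "2 * int m dvd (a - b)"
  shows "by_symbol m x a = by_symbol m x b"
proof -
  have "a mod (2 * int m) = b mod (2 * int m)"
    using assms by (simp add: mod_eq_dvd_iff)
  then show ?thesis
    by (simp add: by_symbol_def)
qed

lemma by_symbol_rowA_seq:
  assumes "j \<in> {1..2 * m}"
  shows "by_symbol m x (rowA_seq m j) = x j"
proof -
  have "1 \<le> j"
    using assms by simp
  then show ?thesis
  proof (rule nat_pos_odd_even_cases)
    fix k assume j: "j = 2 * k + 1"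
    then have "int k mod (2 * int m) = int k" "k < m"
      using assms by simp_all
    then show ?thesis
      using j by (simp add: by_symbol_def rowA_seq_def nat_add_distrib nat_mult_distrib)
  next
    fix k assume j: "j = 2 * k + 2"
    then have "(int k + int m) mod (2 * int m) = int k + int m" "k < m"
      using assms by simp_all
    then show ?thesis
      using j by (simp add: by_symbol_def rowA_seq_def nat_add_distrib nat_mult_distrib)
  qed
qed

lemma by_symbol_range:
  assumes "0 < m"
  shows "\<exists>j\<in>{1..2 * m}. by_symbol m x v = x j"
proof -
  define r where "r = v mod (2 * int m)"
  have r: "0 \<le> r" "r < 2 * int m"
    using assms by (simp_all add: r_def)
  show ?thesis
  proof (cases "r < int m")
    case True
    then have "by_symbol m x v = x (nat (2 * r + 1))" "nat (2 * r + 1) \<in> {1..2 * m}"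
      using r by (auto simp: by_symbol_def r_def[symmetric])
    then show ?thesis
      by blast
  next
    case False
    then have "by_symbol m x v = x (nat (2 * (r - int m) + 2))" "nat (2 * (r - int m) + 2) \<in> {1..2 * m}"
      using r by (auto simp: by_symbol_def r_def[symmetric])
    then show ?thesis
      by blast
  qed
qed

definition antipodal_step :: "nat \<Rightarrow> int \<Rightarrow> int \<Rightarrow> bool" where
  "antipodal_step n a b \<longleftrightarrow> (\<exists>e\<in>{-1, 0, 1}. int n dvd (b - a - int (n div 2) - e))"

definition deviates_from_rowA :: "nat \<Rightarrow> int \<Rightarrow> (nat \<Rightarrow> int) \<Rightarrow> (nat \<Rightarrow> int) \<Rightarrow> bool" where
  "deviates_from_rowA n s w R \<longleftrightarrow>
     (\<forall>j\<in>{1..n}. int n dvd (R j - s - rowA_seq (n div 2) j - w j))"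

lemma deviates_from_rowA_shift:
  assumes "deviates_from_rowA n s w R" "\<forall>j\<in>{1..n}. int n dvd (R' j - R j - c - v j)"
  shows "deviates_from_rowA n (s + c) (\<lambda>j. w j + v j) R'"
  unfolding deviates_from_rowA_def
proof
  fix j assume j: "j \<in> {1..n}"
  have "int n dvd (R' j - R j - c - v j)" "int n dvd (R j - s - rowA_seq (n div 2) j - w j)"
    using assms j unfolding deviates_from_rowA_def by auto
  then have "int n dvd (R' j - R j - c - v j) + (R j - s - rowA_seq (n div 2) j - w j)"
    by (rule dvd_add)
  then show "int n dvd (R' j - (s + c) - rowA_seq (n div 2) j - (w j + v j))"
    by (simp add: algebra_simps)
qed

lemma deviates_from_rowA_dvd:
  assumes "deviates_from_rowA n s w R" "deviates_from_rowA n s' w' R'" "j \<in> {1..n}" "j' \<in> {1..n}"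
    and "int n dvd (s + rowA_seq (n div 2) j + w j - (s' + rowA_seq (n div 2) j' + w' j'))"
  shows "int n dvd (R j - R' j')"
proof -
  have "int n dvd (R j - s - rowA_seq (n div 2) j - w j)"
    "int n dvd (R' j' - s' - rowA_seq (n div 2) j' - w' j')"
    using assms(1-4) unfolding deviates_from_rowA_def by auto
  then have "int n dvd (R j - s - rowA_seq (n div 2) j - w j) - (R' j' - s' - rowA_seq (n div 2) j' - w' j')
      + (s + rowA_seq (n div 2) j + w j - (s' + rowA_seq (n div 2) j' + w' j'))"
    using assms(5) by (rule dvd_add[OF dvd_diff])
  then show ?thesis
    by (simp add: algebra_simps)
qed

lemma deviates_from_rowA_if_ext_diff_row:
  assumes "even n" and A: "\<forall>j\<in>{1..n}. ext_diff_row n R j = rowA n j"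
  shows "deviates_from_rowA n (R 1) (\<lambda>_. 0) R"
proof -
  define m where "m = n div 2"
  have n: "int n = 2 * int m"
    using assms(1) by (auto simp: m_def elim!: evenE)
  have step: "int n dvd (R (k + 1) - rowA_seq m (k + 1) - (R k - rowA_seq m k) - 0)"
    if k: "1 \<le> k" "k < n" for k
  proof -
    let ?X = "R (k + 1) - R k"
    have "?X mod int n = int m + (if even k then 1 else 0)"
      using bspec[OF A, of k] k by (simp add: ext_diff_row_def rowA_def diff_row_def m_def)
    then have "?X mod int n - (rowA_seq m (k + 1) - rowA_seq m k) = (if even k then int n else 0)"
      using rowA_seq_step[OF k(1), of m] n by auto
    moreover have "R (k + 1) - rowA_seq m (k + 1) - (R k - rowA_seq m k) - 0
        = (?X - ?X mod int n) + (?X mod int n - (rowA_seq m (k + 1) - rowA_seq m k))"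
      by simp
    ultimately show ?thesis
      by (simp only: dvd_add dvd_minus_mod) simp
  qed
  have "int n dvd (R j - rowA_seq m j - (R 1 - rowA_seq m 1) - (\<Sum>k\<in>{1..<j}. 0))"
    if "j \<in> {1..n}" for j
    by (rule dvd_telescope[where f = "\<lambda>j. R j - rowA_seq m j", OF step]) (use that in auto)
  then show ?thesis
    unfolding deviates_from_rowA_def m_def[symmetric]
    using rowA_seq_odd[of m 0] by (simp add: algebra_simps)
qed

(* Positions n - 2, n, 1, 3 carry the consecutive symbols -2, -1, 0, 1 of rowA_seq; the four
   patterns swap disjoint pairs of adjacent symbols among them. *)
definition swap_defect :: "nat \<Rightarrow> (nat \<Rightarrow> int) \<Rightarrow> bool" where
  "swap_defect n x \<longleftrightarrow>
     (\<forall>j\<in>{1..n} - {1, 3, n - 2, n}. x j = 0) \<and>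
     (x (n - 2), x n, x 1, x 3) \<in> {(0, 0, 1, -1), (0, 1, -1, 0), (1, -1, 0, 0), (1, -1, 1, -1)}"

locale even_order =
  fixes n m :: nat
  assumes n_eq: "n = 2 * m" and three_le_m: "3 \<le> m"
begin

lemma half_n [simp]: "n div 2 = m"
  using n_eq by simp

lemma int_n: "int n = 2 * int m"
  using n_eq by simp

lemma six_le_n: "6 \<le> n"
  using n_eq three_le_m by simp

lemma antipodal_step_sym:
  assumes "antipodal_step n a b"
  shows "antipodal_step n b a"
proof -
  obtain e where e: "e \<in> {-1, 0, 1}" "int n dvd (b - a - int m - e)"
    using assms unfolding antipodal_step_def half_n by blast
  have eq: "a - b - int m - (- e) = - (b - a - int m - e) - int n"
    using int_n by simp
  have "int n dvd (a - b - int m - (- e))"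
    unfolding eq by (rule dvd_diff[OF iffD2[OF dvd_minus_iff e(2)] dvd_refl])
  moreover have "- e \<in> {-1, 0, 1}"
    using e(1) by auto
  ultimately show ?thesis
    unfolding antipodal_step_def half_n by blast
qed

lemma antipodal_step_if_cdist:
  assumes "int m - 1 \<le> cdist n a b"
  shows "antipodal_step n a b"
proof -
  define d where "d = (b - a) mod int n"
  have "a - b = - (b - a)"
    by simp
  then have ab: "(a - b) mod int n = (if d = 0 then 0 else int n - d)"
    unfolding d_def using zmod_zminus1_eq_if[of "b - a" "int n"] by simp
  have "d \<noteq> 0"
  proof
    assume "d = 0"
    then have "cdist n a b = 0"
      using ab by (simp add: cdist_def d_def)
    then show False
      using assms three_le_m by simp
  qed
  then have "int m - 1 \<le> min (int n - d) d"
    using assms ab by (simp add: cdist_def d_def)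
  then have "d - int m \<in> {-1, 0, 1}"
    using int_n by auto
  moreover have "b - a - int m - (d - int m) = (b - a) - (b - a) mod int n"
    unfolding d_def by simp
  then have "int n dvd (b - a - int m - (d - int m))"
    by (simp only: dvd_minus_mod)
  ultimately show ?thesis
    unfolding antipodal_step_def half_n by blast
qed

lemma deviation_step:
  assumes R: "deviates_from_rowA n s w R" and j: "1 \<le> j" "j < n"
    and step: "antipodal_step n (R j) (R (j + 1))"
  obtains e where "e \<in> {-1, 0, 1}" "int n dvd (w (j + 1) - w j + (if even j then 1 else 0) - e)"
proof -
  obtain e where e: "e \<in> {-1, 0, 1}" "int n dvd (R (j + 1) - R j - int m - e)"
    using step unfolding antipodal_step_def half_n by blast
  have "int n dvd (R (j + 1) - s - rowA_seq m (j + 1) - w (j + 1))"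
    "int n dvd (R j - s - rowA_seq m j - w j)"
    using R j by (auto simp: deviates_from_rowA_def)
  moreover have eq: "w (j + 1) - w j + (if even j then 1 else 0) - e
      = (R (j + 1) - R j - int m - e) - (R (j + 1) - s - rowA_seq m (j + 1) - w (j + 1))
        + (R j - s - rowA_seq m j - w j) + (if even j then int n else 0)"
    using rowA_seq_step[OF j(1), of m] int_n by auto
  ultimately have "int n dvd (w (j + 1) - w j + (if even j then 1 else 0) - e)"
    using e(2) unfolding eq by (intro dvd_add[OF dvd_add[OF dvd_diff]]) simp_all
  with e(1) show ?thesis
    by (rule that)
qed

lemma deviation_step_bounds:
  assumes "deviates_from_rowA n s w R" "1 \<le> j" "j < n" "antipodal_step n (R j) (R (j + 1))"
    and w: "\<bar>w j\<bar> \<le> 2" "\<bar>w (j + 1)\<bar> \<le> 2"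
  shows "odd j \<Longrightarrow> \<bar>w (j + 1) - w j\<bar> \<le> 1"
    and "even j \<Longrightarrow> w (j + 1) \<le> w j \<or> (w j = -2 \<and> w (j + 1) = 2)"
proof -
  obtain e where e: "e \<in> {-1, 0, 1}" "int n dvd (w (j + 1) - w j + (if even j then 1 else 0) - e)"
    using deviation_step[OF assms(1-4)] by blast
  show "\<bar>w (j + 1) - w j\<bar> \<le> 1" if "odd j"
  proof -
    have "w (j + 1) - w j - e = 0"
      using e w that six_le_n by (intro dvd_abs_less_imp_eq_0) auto
    then show ?thesis
      using e(1) by auto
  qed
  show "w (j + 1) \<le> w j \<or> (w j = -2 \<and> w (j + 1) = 2)" if "even j"
  proof (cases "w (j + 1) - w j + 1 - e = int n")
    case True
    then show ?thesis
      using e(1) w six_le_n by auto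
  next
    case False
    have "w (j + 1) - w j + 1 - e = 0"
      using e w that six_le_n False by (intro dvd_abs_less_imp_eq_0) auto
    then show ?thesis
      using e(1) by auto
  qed
qed

lemma by_symbol_at: "j \<in> {1..n} \<Longrightarrow> by_symbol m x (rowA_seq m j) = x j"
  using by_symbol_rowA_seq n_eq by simp

lemma by_symbol_near_zero:
  shows "by_symbol m x (-2) = x (n - 2)" and "by_symbol m x (-1) = x n"
    and "by_symbol m x 0 = x 1" and "by_symbol m x 1 = x 3"
proof -
  have j: "n - 2 = 2 * (m - 2) + 2" "n = 2 * (m - 1) + 2" "n - 2 \<in> {1..n}" "n \<in> {1..n}"
    using n_eq three_le_m by auto
  have "by_symbol m x (-2) = by_symbol m x (int (m - 2) + int m)"
    by (rule by_symbol_periodic) (use three_le_m in \<open>simp add: of_nat_diff\<close>)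
  also have "\<dots> = x (n - 2)"
    using by_symbol_at[OF j(3)] unfolding j(1) rowA_seq_even by simp
  finally show "by_symbol m x (-2) = x (n - 2)" .
  have "by_symbol m x (-1) = by_symbol m x (int (m - 1) + int m)"
    by (rule by_symbol_periodic) (use three_le_m in \<open>simp add: of_nat_diff\<close>)
  also have "\<dots> = x n"
    using by_symbol_at[OF j(4)] unfolding j(2) rowA_seq_even by simp
  finally show "by_symbol m x (-1) = x n" .
  show "by_symbol m x 0 = x 1" "by_symbol m x 1 = x 3"
    using by_symbol_at[of "2 * 0 + 1", unfolded rowA_seq_odd]
      by_symbol_at[of "2 * 1 + 1", unfolded rowA_seq_odd] six_le_n
    by simp_all
qed

lemma by_symbol_surj:
  assumes R: "deviates_from_rowA n s x R" and surj: "\<forall>q. \<exists>j\<in>{1..n}. int n dvd (R j - q)"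
  shows "\<exists>p. 2 * int m dvd (p + by_symbol m x p - q)"
proof -
  obtain j where j: "j \<in> {1..n}" "int n dvd (R j - (s + q))"
    using surj by blast
  have "int n dvd (R j - s - rowA_seq m j - x j)"
    using R j(1) by (simp add: deviates_from_rowA_def)
  with j(2) have "int n dvd (R j - (s + q)) - (R j - s - rowA_seq m j - x j)"
    by (rule dvd_diff)
  moreover have "(R j - (s + q)) - (R j - s - rowA_seq m j - x j)
      = rowA_seq m j + by_symbol m x (rowA_seq m j) - q"
    using by_symbol_rowA_seq[of j m x] j(1) n_eq by simp
  ultimately show ?thesis
    unfolding int_n by auto
qed

lemma by_symbol_order:
  assumes R: "deviates_from_rowA n s x R" and x: "\<forall>j\<in>{1..n}. x j \<in> {-1, 0, 1}"
    and hor: "\<forall>j\<in>{1..n - 1}. antipodal_step n (R j) (R (j + 1))"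
  shows "\<And>k. 0 \<le> k \<Longrightarrow> k < int m \<Longrightarrow> \<bar>by_symbol m x k - by_symbol m x (int m + k)\<bar> \<le> 1"
    and "\<And>k. 0 \<le> k \<Longrightarrow> k \<le> int m - 2 \<Longrightarrow> by_symbol m x (k + 1) \<le> by_symbol m x (int m + k)"
proof -
  have small: "\<bar>x j\<bar> \<le> 2" if "j \<in> {1..n}" for j
    using x that by fastforce
  fix k :: int assume "0 \<le> k"
  then obtain i where k: "k = int i"
    using nonneg_int_cases by blast
  show "\<bar>by_symbol m x k - by_symbol m x (int m + k)\<bar> \<le> 1" if "k < int m"
  proof -
    have "\<bar>x (2 * i + 1 + 1) - x (2 * i + 1)\<bar> \<le> 1"
      using k that n_eq small[of "2 * i + 1"] small[of "2 * i + 2"] hor[rule_format, of "2 * i + 1"]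
      by (intro deviation_step_bounds(1)[OF R]) auto
    then show ?thesis
      using by_symbol_at[of "2 * i + 1"] by_symbol_at[of "2 * i + 2"] k that n_eq
      by (simp add: rowA_seq_def add.commute)
  qed
  show "by_symbol m x (k + 1) \<le> by_symbol m x (int m + k)" if "k \<le> int m - 2"
  proof -
    have "x (2 * i + 2 + 1) \<le> x (2 * i + 2) \<or> (x (2 * i + 2) = -2 \<and> x (2 * i + 2 + 1) = 2)"
      using k that n_eq small[of "2 * i + 2"] small[of "2 * i + 2 + 1"] hor[rule_format, of "2 * i + 2"]
      by (intro deviation_step_bounds(2)[OF R]) auto
    then have "x (2 * (i + 1) + 1) \<le> x (2 * i + 2)"
      using x[rule_format, of "2 * i + 2"] k that n_eq by auto
    then show ?thesis
      using by_symbol_at[of "2 * (i + 1) + 1"] by_symbol_at[of "2 * i + 2"] k that n_eq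
      by (simp add: rowA_seq_def add.commute)
  qed
qed

lemma swap_defect_if_nonconstant:
  assumes R: "deviates_from_rowA n s x R" and x: "\<forall>j\<in>{1..n}. x j \<in> {-1, 0, 1}"
    and hor: "\<forall>j\<in>{1..n - 1}. antipodal_step n (R j) (R (j + 1))"
    and surj: "\<forall>q. \<exists>j\<in>{1..n}. int n dvd (R j - q)"
    and nonconst: "j0 \<in> {1..n}" "x j0 \<noteq> x 1"
  shows "swap_defect n x"
proof -
  let ?\<delta> = "by_symbol m x"
  have per: "?\<delta> a = ?\<delta> b" if "2 * int m dvd (a - b)" for a b
    using by_symbol_periodic that .
  have rng: "?\<delta> a \<in> {-1, 0, 1}" for a
    using by_symbol_range[of m x a] three_le_m x n_eq by auto
  have m3: "3 \<le> int m"
    using three_le_m by simp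
  have "?\<delta> (rowA_seq m j0) \<noteq> ?\<delta> (rowA_seq m 1)"
    using by_symbol_at[of j0] by_symbol_at[of 1] nonconst six_le_n by simp
  note near_identity = m3 per rng by_symbol_surj[OF R surj] this
    by_symbol_order(1)[OF R x hor] by_symbol_order(2)[OF R x hor]
  have "x j = 0" if "j \<in> {1..n} - {1, 3, n - 2, n}" for j
    using near_identity_perm_vanishes[where \<delta> = ?\<delta>, OF near_identity, of "rowA_seq m j"]
      rowA_seq_interior[of j m] by_symbol_at[of j] that n_eq by auto
  then show ?thesis
    unfolding swap_defect_def
    using near_identity_perm_swaps[where \<delta> = ?\<delta>, OF near_identity] by_symbol_near_zero by simp
qed

lemma swap_defect_values:
  assumes "swap_defect n x"
  shows "x 2 = 0" and "\<exists>j\<in>{1..n}. x j = 1" and "\<exists>j\<in>{1..n}. x j = -1"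
proof -
  have mem: "n - 2 \<in> {1..n}" "n \<in> {1..n}" "1 \<in> {1..n}" "3 \<in> {1..n}"
    using six_le_n by auto
  have "2 \<in> {1..n} - {1, 3, n - 2, n}"
    using six_le_n by auto
  then show "x 2 = 0"
    using assms unfolding swap_defect_def by blast
  have "(x (n - 2), x n, x 1, x 3) \<in> {(0, 0, 1, -1), (0, 1, -1, 0), (1, -1, 0, 0), (1, -1, 1, -1)}"
    using assms unfolding swap_defect_def by simp
  then show "\<exists>j\<in>{1..n}. x j = 1" and "\<exists>j\<in>{1..n}. x j = -1"
    using mem by (auto; blast)+
qed

lemma swap_defect_meets_offset:
  assumes x: "swap_defect n x" and y: "\<forall>j\<in>{1..n}. y j \<in> {-1, 0, 1}"
    and y_cases: "(\<forall>j\<in>{1..n}. y j = y 1) \<or> swap_defect n y"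
  obtains j where "j \<in> {1..n}" "x j = y j"
proof (cases "swap_defect n y")
  case True
  have "2 \<in> {1..n}"
    using six_le_n by simp
  moreover have "x 2 = y 2"
    using swap_defect_values(1)[OF x] swap_defect_values(1)[OF True] by simp
  ultimately show ?thesis
    by (rule that)
next
  case False
  then have const: "y j = y 1" if "j \<in> {1..n}" for j
    using y_cases that by blast
  have "1 \<in> {1..n}" "2 \<in> {1..n}"
    using six_le_n by simp_all
  then consider "y 1 = 0" | "y 1 = 1" | "y 1 = -1"
    using y by blast
  then show ?thesis
  proof cases
    case 1
    then show ?thesis
      using that[OF \<open>2 \<in> {1..n}\<close>] const[OF \<open>2 \<in> {1..n}\<close>] swap_defect_values(1)[OF x] by simp
  next
    case 2
    obtain j where j: "j \<in> {1..n}" "x j = 1"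
      using swap_defect_values(2)[OF x] by blast
    then show ?thesis
      using that[OF j(1)] const[OF j(1)] 2 by simp
  next
    case 3
    obtain j where j: "j \<in> {1..n}" "x j = -1"
      using swap_defect_values(3)[OF x] by blast
    then show ?thesis
      using that[OF j(1)] const[OF j(1)] 3 by simp
  qed
qed

(* In each case below two positions of R are forced to carry the same symbol. *)
context
  fixes x w R :: "nat \<Rightarrow> int" and s :: int
  assumes swap: "swap_defect n x"
    and R: "deviates_from_rowA n s w R"
    and w: "\<forall>j\<in>{1..n}. w j \<noteq> 0 \<and> \<bar>w j - x j\<bar> \<le> 1"
    and hor: "\<forall>j\<in>{1..n - 1}. antipodal_step n (R j) (R (j + 1))"
    and inj: "\<forall>j\<in>{1..n}. \<forall>j'\<in>{1..n}. int n dvd (R j - R j') \<longrightarrow> j = j'"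
begin

private lemma x_zero: "j \<in> {1..n} - {1, 3, n - 2, n} \<Longrightarrow> x j = 0"
  using swap unfolding swap_defect_def by blast

private lemma x_cases:
  "(x (n - 2), x n, x 1, x 3) \<in> {(0, 0, 1, -1), (0, 1, -1, 0), (1, -1, 0, 0), (1, -1, 1, -1)}"
  using swap unfolding swap_defect_def by blast

private lemma w_at: "j \<in> {1..n} \<Longrightarrow> w j \<noteq> 0 \<and> \<bar>w j - x j\<bar> \<le> 1"
  using w by blast

private lemma w_small:
  assumes "j \<in> {1..n}"
  shows "\<bar>w j\<bar> \<le> 2"
proof (cases "j \<in> {1, 3, n - 2, n}")
  case True
  then have "x j \<in> {-1, 0, 1}"
    using x_cases by auto
  then show ?thesis
    using w_at[OF assms] by auto
next
  case False
  then show ?thesis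
    using w_at[OF assms] x_zero[of j] assms by auto
qed

private lemma odd_step:
  assumes "1 \<le> j" "j + 1 = j'" "j' \<le> n" "odd j"
  shows "\<bar>w j' - w j\<bar> \<le> 1"
  using deviation_step_bounds(1)[OF R, of j] assms hor w_small[of j] w_small[of j'] by auto

private lemma even_step:
  assumes "1 \<le> j" "j + 1 = j'" "j' \<le> n" "even j"
  shows "w j' \<le> w j \<or> (w j = -2 \<and> w j' = 2)"
  using deviation_step_bounds(2)[OF R, of j] assms hor w_small[of j] w_small[of j'] by auto

private lemma collide:
  assumes "j \<in> {1..n}" "j' \<in> {1..n}" "rowA_seq m j + w j = rowA_seq m j' + w j'"
  shows "j = j'"
proof -
  have "s + rowA_seq (n div 2) j + w j - (s + rowA_seq (n div 2) j' + w j') = 0"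
    using assms(3) by simp
  then have "int n dvd (R j - R j')"
    using deviates_from_rowA_dvd[OF R R assms(1,2)] by simp
  then show ?thesis
    using inj assms(1,2) by blast
qed

private lemma first_up_impossible: "x 1 \<noteq> 1"
proof
  assume x1: "x 1 = 1"
  have x3: "x 3 = -1" and tail: "x (n - 2) = 0 \<and> x n = 0 \<or> x (n - 2) = 1 \<and> x n = -1"
    using x_cases x1 by auto
  have "5 \<noteq> n - 2" "5 \<noteq> n"
    using n_eq by presburger+
  then have x2: "x 2 = 0" and x5: "x 5 = 0"
    using x_zero[of 2] x_zero[of 5] six_le_n by auto
  have x4: "0 \<le> x 4"
    using tail x_zero[of 4] six_le_n by (cases "n = 6") auto
  have w13: "1 \<le> w 1" "w 3 \<le> -1"
    using w_at[of 1] w_at[of 3] x1 x3 six_le_n by auto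
  then have w2: "w 2 = 1"
    using odd_step[of 1 2] w_at[of 2] x2 six_le_n by auto
  have w4: "w 4 = -1" and "x 4 = 0"
    using odd_step[of 3 4] w_at[of 4] x4 w13 six_le_n by auto
  then have x6: "0 \<le> x 6"
    using tail x_zero[of 6] six_le_n by (cases "n = 6 \<or> n = 8") auto
  have "w 5 = -1"
    using even_step[of 4 5] w_at[of 5] x5 w4 six_le_n by auto
  then have "w 6 = -1"
    using odd_step[of 5 6] w_at[of 6] x6 six_le_n by auto
  then have "(2::nat) = 6"
    using collide[of 2 6] w2 six_le_n by (simp add: rowA_seq_def)
  then show False
    by simp
qed

private lemma first_down_impossible: "x 1 \<noteq> -1"
proof
  assume x1: "x 1 = -1"
  have xs: "x (n - 2) = 0" "x n = 1" "x 3 = 0"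
    using x_cases x1 by auto
  have zero: "x j = 0" if "j \<in> {1..n}" "j \<noteq> 1" "j \<noteq> n" for j
    using x_zero[of j] xs that by auto
  have xz: "x 2 = 0" "x 4 = 0" "x (n - 1) = 0"
    by (rule zero; use six_le_n in auto)+
  have odd_n1: "odd (n - 1)" and n1: "n - 1 = 2 * (m - 1) + 1"
    using n_eq three_le_m by presburger+
  have steps: "\<bar>w 2 - w 1\<bar> \<le> 1" "w 3 \<le> w 2 \<or> (w 2 = -2 \<and> w 3 = 2)" "\<bar>w 4 - w 3\<bar> \<le> 1"
    "\<bar>w n - w (n - 1)\<bar> \<le> 1"
    by (rule odd_step even_step; use six_le_n odd_n1 in auto)+
  have at: "w j \<noteq> 0 \<and> \<bar>w j - x j\<bar> \<le> 1" if "j \<in> {1, 2, 4, n - 1, n}" for j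
  proof -
    have "j \<in> {1..n}"
      using that six_le_n by auto
    then show ?thesis
      by (rule w_at)
  qed
  have "w 1 \<le> -1"
    using at[of 1] x1 by auto
  then have "w 2 = -1"
    using at[of 2] xz(1) steps(1) by auto
  then have "w 4 = -1"
    using at[of 4] xz(2) steps(2,3) by auto
  moreover have "w (n - 1) = 1"
    using at[of n] at[of "n - 1"] xs(2) xz(3) steps(4) by auto
  moreover have "rowA_seq m (n - 1) = int m - 1"
    unfolding n1 rowA_seq_odd using three_le_m by simp
  ultimately have "4 = n - 1"
    using collide[of 4 "n - 1"] six_le_n by (simp add: rowA_seq_def)
  then show False
    using n_eq by presburger
qed

private lemma first_fixed_impossible: "x 1 \<noteq> 0"
proof
  assume x1: "x 1 = 0"
  have xs: "x (n - 2) = 1" "x n = -1" "x 3 = 0"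
    using x_cases x1 by auto
  have zero: "x j = 0" if "j \<in> {1..n}" "j \<noteq> n - 2" "j \<noteq> n" for j
    using x_zero[of j] xs x1 that by auto
  have xz: "x (n - 1) = 0" "x (n - 3) = 0" "x (n - 4) = 0" "x (n - 5) = 0"
    by (rule zero; use six_le_n in auto)+
  have parity: "odd (n - 1)" "odd (n - 3)" "even (n - 4)" "odd (n - 5)"
    and n1: "n - 1 = 2 * (m - 1) + 1" and n5: "n - 5 = 2 * (m - 3) + 1"
    using n_eq three_le_m by presburger+
  have steps: "\<bar>w (n - 2) - w (n - 3)\<bar> \<le> 1"
    "w (n - 3) \<le> w (n - 4) \<or> (w (n - 4) = -2 \<and> w (n - 3) = 2)"
    "\<bar>w (n - 4) - w (n - 5)\<bar> \<le> 1" "\<bar>w n - w (n - 1)\<bar> \<le> 1"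
    by (rule odd_step even_step; use six_le_n parity in auto)+
  have at: "w j \<noteq> 0 \<and> \<bar>w j - x j\<bar> \<le> 1" if "j \<in> {n - 5, n - 4, n - 3, n - 2, n - 1, n}" for j
  proof -
    have "j \<in> {1..n}"
      using that six_le_n by auto
    then show ?thesis
      by (rule w_at)
  qed
  have "1 \<le> w (n - 2)"
    using at[of "n - 2"] xs(1) by auto
  then have "1 \<le> w (n - 3)"
    using at[of "n - 3"] xz(2) steps(1) by auto
  then have "1 \<le> w (n - 4)"
    using at[of "n - 4"] xz(3) steps(2) by auto
  then have "w (n - 5) = 1"
    using at[of "n - 5"] xz(4) steps(3) by auto
  moreover have "w (n - 1) = -1"
    using at[of n] at[of "n - 1"] xs(2) xz(1) steps(4) by auto
  moreover have "rowA_seq m (n - 5) = int m - 3" "rowA_seq m (n - 1) = int m - 1"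
    unfolding n1 n5 rowA_seq_odd using three_le_m by simp_all
  ultimately have "n - 5 = n - 1"
    using collide[of "n - 5" "n - 1"] six_le_n by simp
  then show False
    using six_le_n by simp
qed

lemma no_row_beside_swap_defect: False
  using x_cases first_up_impossible first_down_impossible first_fixed_impossible by auto

end

end

section \<open>Latin squares of inner distance n/2 - 1\<close>

lemma inner_distance_le:
  shows "i \<in> {1..n} \<Longrightarrow> j \<in> {1..n - 1} \<Longrightarrow> inner_distance n M \<le> cdist n (M i j) (M i (j + 1))"
    and "i \<in> {1..n - 1} \<Longrightarrow> j \<in> {1..n} \<Longrightarrow> inner_distance n M \<le> cdist n (M i j) (M (i + 1) j)"
proof -
  let ?H = "{cdist n (M i j) (M i (j + 1)) | i j. i \<in> {1..n} \<and> j \<in> {1..n - 1}}"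
  let ?V = "{cdist n (M i j) (M (i + 1) j) | i j. i \<in> {1..n - 1} \<and> j \<in> {1..n}}"
  have fin: "finite (?H \<union> ?V)"
    by (intro finite_UnI finite_image_set2) auto
  show "inner_distance n M \<le> cdist n (M i j) (M i (j + 1))" if "i \<in> {1..n}" "j \<in> {1..n - 1}"
    unfolding inner_distance_def by (rule Min_le[OF fin]) (use that in blast)
  show "inner_distance n M \<le> cdist n (M i j) (M (i + 1) j)" if "i \<in> {1..n - 1}" "j \<in> {1..n}"
    unfolding inner_distance_def by (rule Min_le[OF fin]) (use that in blast)
qed

lemma other_neighbour:
  fixes i i' n :: nat
  assumes "3 \<le> n" "i \<in> {1..n}" "i' \<in> {1..n}" "i' = i + 1 \<or> i = i' + 1"
  obtains b where "b \<in> {1..n}" "b \<noteq> i'" "b = i + 1 \<or> i = b + 1"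
    | b where "b \<in> {1..n}" "b \<noteq> i" "b = i' + 1 \<or> i' = b + 1"
proof -
  consider "i' = i + 1" "2 \<le> i" | "i' = i + 1" "i = 1" | "i = i' + 1" "i < n" | "i = i' + 1" "i = n"
    using assms by fastforce
  then show ?thesis
  proof cases
    case 1
    then have "i - 1 \<in> {1..n}" "i - 1 \<noteq> i'" "i = (i - 1) + 1"
      using assms by auto
    then show ?thesis
      using that(1) by blast
  next
    case 2
    then show ?thesis
      using that(2)[of "i' + 1"] assms by auto
  next
    case 3
    then show ?thesis
      using that(1)[of "i + 1"] assms by auto
  next
    case 4
    then have "i' - 1 \<in> {1..n}" "i' - 1 \<noteq> i" "i' = (i' - 1) + 1"
      using assms by auto
    then show ?thesis
      using that(2) by blast
  qed
qed

lemma row_product_if_constant_row_differences: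
  assumes latin: "latin_square n L"
    and const: "\<And>i j. i \<in> {1..n - 1} \<Longrightarrow> j \<in> {1..n} \<Longrightarrow>
      int n dvd (L (i + 1) j - L i j - (L (i + 1) 1 - L i 1))"
  shows "row_product n L"
proof -
  define d where "d = diff_row n (L 1)"
  define d' where "d' = diff_row n (\<lambda>i. L i 1)"
  have "latin_row n (L 1) \<and> latin_row n (\<lambda>i. L i 1)"
  proof (cases "n = 0")
    case True
    then show ?thesis
      by (simp add: latin_row_def bij_betw_def)
  next
    case False
    then show ?thesis
      using latin by (simp add: latin_row_def latin_square_def)
  qed
  then have diff_rows: "is_difference_row n d" "is_difference_row n d'"
    unfolding is_difference_row_def d_def d'_def by blast+
  have first_row: "int n dvd (L 1 j - L 1 1 - (\<Sum>k\<in>{1..<j}. d k))" if "j \<in> {1..n}" for j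
    by (rule dvd_telescope[where N = n]) (use that in \<open>simp_all add: d_def diff_row_def dvd_diff_commute\<close>)
  have columns: "int n dvd (L i j - L 1 j - (\<Sum>k\<in>{1..<i}. d' k))" if "i \<in> {1..n}" "j \<in> {1..n}" for i j
  proof (rule dvd_telescope[where N = n])
    fix k assume k: "1 \<le> k" "k < n"
    let ?X = "L (k + 1) 1 - L k 1"
    have eq: "L (k + 1) j - L k j - d' k = (L (k + 1) j - L k j - ?X) + (?X - ?X mod int n)"
      by (simp add: d'_def diff_row_def)
    show "int n dvd (L (k + 1) j - L k j - d' k)"
      unfolding eq using const[of k j] k that(2) by (intro dvd_add) auto
  qed (use that in auto)
  have "L i j = (prod_mat n d d' i j - 1 + (L 1 1 - 1)) mod int n + 1"
    if "i \<in> {1..n}" "j \<in> {1..n}" for i j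
  proof -
    have "L i j \<in> {1..int n}"
      using latin that bij_betw_apply unfolding latin_square_def by fastforce
    moreover have "int n dvd (L i j - 1 - ((\<Sum>k\<in>{1..<i}. d' k) + (\<Sum>k\<in>{1..<j}. d k) + (L 1 1 - 1)))"
      using dvd_add[OF columns[OF that] first_row[OF that(2)]] by (simp add: algebra_simps)
    ultimately show ?thesis
      unfolding prod_mat_def by (simp add: eq_mod_plus_one mod_add_left_eq)
  qed
  then show ?thesis
    unfolding row_product_def using latin diff_rows by blast
qed

locale nearly_antipodal_square = even_order +
  fixes L :: "nat \<Rightarrow> nat \<Rightarrow> int"
  assumes latin: "latin_square n L"
    and inner: "inner_distance n L = int m - 1"
begin

lemma row_inj:
  assumes "i \<in> {1..n}"
  shows "\<forall>j\<in>{1..n}. \<forall>j'\<in>{1..n}. int n dvd (L i j - L i j') \<longrightarrow> j = j'"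
  using bij_betw_residues_inj[of "\<lambda>j. L i j" "{1..n}" n] latin assms
  unfolding latin_square_def by blast

lemma col_inj:
  assumes "j \<in> {1..n}" "i \<in> {1..n}" "i' \<in> {1..n}" "int n dvd (L i j - L i' j)"
  shows "i = i'"
  using bij_betw_residues_inj[of "\<lambda>i. L i j" "{1..n}" n] latin assms
  unfolding latin_square_def by blast

lemma row_surj:
  assumes "i \<in> {1..n}"
  shows "\<forall>q. \<exists>j\<in>{1..n}. int n dvd (L i j - q)"
  using bij_betw_residues_surj[of "\<lambda>j. L i j" "{1..n}" n] latin assms six_le_n
  unfolding latin_square_def by auto

lemma horizontal:
  assumes "i \<in> {1..n}"
  shows "\<forall>j\<in>{1..n - 1}. antipodal_step n (L i j) (L i (j + 1))"
proof
  fix j assume "j \<in> {1..n - 1}"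
  then have "int m - 1 \<le> cdist n (L i j) (L i (j + 1))"
    using inner_distance_le(1)[OF assms, of j L] inner by simp
  then show "antipodal_step n (L i j) (L i (j + 1))"
    by (rule antipodal_step_if_cdist)
qed

lemma vertical:
  assumes "i \<in> {1..n}" "i' \<in> {1..n}" "i' = i + 1 \<or> i = i' + 1" "j \<in> {1..n}"
  shows "antipodal_step n (L i j) (L i' j)"
  using assms(3)
proof
  assume "i' = i + 1"
  then show ?thesis
    using inner_distance_le(2)[of i n j L] inner antipodal_step_if_cdist assms by auto
next
  assume "i = i' + 1"
  then show ?thesis
    using inner_distance_le(2)[of i' n j L] inner antipodal_step_if_cdist antipodal_step_sym assms
    by auto
qed

lemma neighbour_offsets:
  assumes "i \<in> {1..n}" "i' \<in> {1..n}" "i' = i + 1 \<or> i = i' + 1"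
  obtains x where "\<forall>j\<in>{1..n}. x j \<in> {-1, 0, 1}"
    and "\<forall>j\<in>{1..n}. int n dvd (L i' j - L i j - int m - x j)"
proof -
  have "\<forall>j\<in>{1..n}. \<exists>e. e \<in> {-1, 0, 1} \<and> int n dvd (L i' j - L i j - int m - e)"
    using vertical[OF assms] unfolding antipodal_step_def half_n by blast
  then obtain x where "\<forall>j\<in>{1..n}. x j \<in> {-1, 0, 1} \<and> int n dvd (L i' j - L i j - int m - x j)"
    by (rule bchoice[THEN exE])
  then show ?thesis
    using that by blast
qed

lemma no_second_neighbour_beside_swap:
  assumes Ri: "deviates_from_rowA n s (\<lambda>_. 0) (L i)"
    and Ri': "deviates_from_rowA n (s + int m) x (L i')" and swap: "swap_defect n x"
    and i: "i \<in> {1..n}" "i' \<in> {1..n}"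
    and b: "b \<in> {1..n}" "b \<noteq> i'" "b = i + 1 \<or> i = b + 1"
  shows False
proof -
  obtain y where y: "\<forall>j\<in>{1..n}. y j \<in> {-1, 0, 1}"
    and yb: "\<forall>j\<in>{1..n}. int n dvd (L b j - L i j - int m - y j)"
    using neighbour_offsets[OF i(1) b(1) b(3)] .
  have Rb: "deviates_from_rowA n (s + int m) y (L b)"
    using deviates_from_rowA_shift[OF Ri yb] by simp
  have "(\<forall>j\<in>{1..n}. y j = y 1) \<or> swap_defect n y"
    using swap_defect_if_nonconstant[OF Rb y horizontal[OF b(1)] row_surj[OF b(1)]] by blast
  then obtain j where j: "j \<in> {1..n}" "x j = y j"
    by (rule swap_defect_meets_offset[OF swap y])
  then have "int n dvd (L i' j - L b j)"
    using deviates_from_rowA_dvd[OF Ri' Rb j(1) j(1)] by simp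
  then show False
    using col_inj[OF j(1) i(2) b(1)] b(2) by simp
qed

lemma no_row_beyond_swap_neighbour:
  assumes Ri: "deviates_from_rowA n s (\<lambda>_. 0) (L i)"
    and Ri': "deviates_from_rowA n (s + int m) x (L i')" and swap: "swap_defect n x"
    and i: "i \<in> {1..n}" "i' \<in> {1..n}"
    and b: "b \<in> {1..n}" "b \<noteq> i" "b = i' + 1 \<or> i' = b + 1"
  shows False
proof -
  obtain z where z: "\<forall>j\<in>{1..n}. z j \<in> {-1, 0, 1}"
    and zb: "\<forall>j\<in>{1..n}. int n dvd (L b j - L i' j - int m - z j)"
    using neighbour_offsets[OF i(2) b(1) b(3)] .
  have Rb: "deviates_from_rowA n (s + int m + int m) (\<lambda>j. x j + z j) (L b)"
    by (rule deviates_from_rowA_shift[OF Ri' zb])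
  have "x j + z j \<noteq> 0 \<and> \<bar>x j + z j - x j\<bar> \<le> 1" if j: "j \<in> {1..n}" for j
  proof
    show "\<bar>x j + z j - x j\<bar> \<le> 1"
      using bspec[OF z j] by auto
    show "x j + z j \<noteq> 0"
    proof
      assume "x j + z j = 0"
      then have "s + int m + int m + rowA_seq (n div 2) j + (x j + z j) - (s + rowA_seq (n div 2) j + 0)
          = int n"
        using int_n by simp
      then have "int n dvd (L b j - L i j)"
        using deviates_from_rowA_dvd[OF Rb Ri j j] by simp
      then show False
        using col_inj[OF j b(1) i(1)] b(2) by simp
    qed
  qed
  then show False
    using no_row_beside_swap_defect[OF swap Rb _ horizontal[OF b(1)] row_inj[OF b(1)]] by blast
qed

lemma adjacent_row_difference_constant:
  assumes Ri: "deviates_from_rowA n s (\<lambda>_. 0) (L i)"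
    and i: "i \<in> {1..n}" "i' \<in> {1..n}" "i' = i + 1 \<or> i = i' + 1"
  shows "\<exists>c. \<forall>j\<in>{1..n}. int n dvd (L i' j - L i j - c)"
proof -
  obtain x where x: "\<forall>j\<in>{1..n}. x j \<in> {-1, 0, 1}"
    and xi': "\<forall>j\<in>{1..n}. int n dvd (L i' j - L i j - int m - x j)"
    using neighbour_offsets[OF i] .
  show ?thesis
  proof (cases "\<forall>j\<in>{1..n}. x j = x 1")
    case True
    have "int n dvd (L i' j - L i j - (int m + x 1))" if "j \<in> {1..n}" for j
      using bspec[OF xi' that] bspec[OF True that] by (simp add: algebra_simps)
    then show ?thesis
      by blast
  next
    case False
    then obtain j0 where j0: "j0 \<in> {1..n}" "x j0 \<noteq> x 1"
      by blast
    have Ri': "deviates_from_rowA n (s + int m) x (L i')"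
      using deviates_from_rowA_shift[OF Ri xi'] by simp
    have swap: "swap_defect n x"
      by (rule swap_defect_if_nonconstant[OF Ri' x horizontal[OF i(2)] row_surj[OF i(2)] j0])
    have False
    proof (rule other_neighbour[OF _ i])
      show "3 \<le> n"
        using six_le_n by simp
    next
      fix b assume "b \<in> {1..n}" "b \<noteq> i'" "b = i + 1 \<or> i = b + 1"
      then show False
        by (rule no_second_neighbour_beside_swap[OF Ri Ri' swap i(1,2)])
    next
      fix b assume "b \<in> {1..n}" "b \<noteq> i" "b = i' + 1 \<or> i' = b + 1"
      then show False
        by (rule no_row_beyond_swap_neighbour[OF Ri Ri' swap i(1,2)])
    qed
    then show ?thesis ..
  qed
qed

lemma rowA_shift_neighbour:
  assumes "deviates_from_rowA n s (\<lambda>_. 0) (L i)"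
    and "i \<in> {1..n}" "i' \<in> {1..n}" "i' = i + 1 \<or> i = i' + 1"
  shows "\<exists>s'. deviates_from_rowA n s' (\<lambda>_. 0) (L i')"
proof -
  obtain c where "\<forall>j\<in>{1..n}. int n dvd (L i' j - L i j - c - 0)"
    using adjacent_row_difference_constant[OF assms] by auto
  from deviates_from_rowA_shift[OF assms(1) this] show ?thesis
    by auto
qed

lemma rows_rowA_shifts:
  assumes "i0 \<in> {1..n}" "\<forall>j\<in>{1..n}. ext_diff_row n (L i0) j = rowA n j" "i \<in> {1..n}"
  shows "\<exists>s. deviates_from_rowA n s (\<lambda>_. 0) (L i)"
proof (rule iff_propagates_on_interval[where P = "\<lambda>i. \<exists>s. deviates_from_rowA n s (\<lambda>_. 0) (L i)"])
  show "\<exists>s. deviates_from_rowA n s (\<lambda>_. 0) (L i0)"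
    using deviates_from_rowA_if_ext_diff_row[OF _ assms(2)] n_eq by auto
  fix k assume "k \<in> {1..n - 1}"
  then show "(\<exists>s. deviates_from_rowA n s (\<lambda>_. 0) (L k))
      \<longleftrightarrow> (\<exists>s. deviates_from_rowA n s (\<lambda>_. 0) (L (k + 1)))"
    using rowA_shift_neighbour[of _ k "k + 1"] rowA_shift_neighbour[of _ "k + 1" k] by auto
qed (use assms in auto)

lemma consecutive_rows_differ_by_constants:
  assumes i0: "i0 \<in> {1..n}" "\<forall>j\<in>{1..n}. ext_diff_row n (L i0) j = rowA n j"
    and i: "i \<in> {1..n - 1}" and j: "j \<in> {1..n}"
  shows "int n dvd (L (i + 1) j - L i j - (L (i + 1) 1 - L i 1))"
proof -
  have rows: "i \<in> {1..n}" "i + 1 \<in> {1..n}"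
    using i by auto
  obtain s where "deviates_from_rowA n s (\<lambda>_. 0) (L i)"
    using rows_rowA_shifts[OF i0 rows(1)] by blast
  then obtain c where c: "\<forall>j\<in>{1..n}. int n dvd (L (i + 1) j - L i j - c)"
    using adjacent_row_difference_constant[OF _ rows] by blast
  have "int n dvd (L (i + 1) 1 - L i 1 - c)"
    using bspec[OF c, of 1] six_le_n by simp
  with bspec[OF c j] have "int n dvd (L (i + 1) j - L i j - c) - (L (i + 1) 1 - L i 1 - c)"
    by (rule dvd_diff)
  then show ?thesis
    by (simp add: algebra_simps)
qed

end

theorem mainTheorem18:
  fixes n :: nat and L :: "nat \<Rightarrow> nat \<Rightarrow> int"
  assumes "n \<ge> 6" and "even n"
    and "latin_square n L"
    and "inner_distance n L = int (n div 2) - 1"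
    and "\<exists>i\<in>{1..n}. \<forall>j\<in>{1..n}. ext_diff_row n (L i) j = rowA n j"
  shows "row_product n L"
proof -
  interpret nearly_antipodal_square n "n div 2" L
    by unfold_locales (use assms(1-4) in auto)
  obtain i0 where i0: "i0 \<in> {1..n}" "\<forall>j\<in>{1..n}. ext_diff_row n (L i0) j = rowA n j"
    using assms(5) by blast
  show ?thesis
    using row_product_if_constant_row_differences[OF assms(3)]
      consecutive_rows_differ_by_constants[OF i0] by blast
qed

end
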